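(* For every $\varphi\in\mathcal{L}_{AIL}$, the canonical model $M^*$ for $cl(\varphi)$ is an epistemic model with awareness.
   Context: An epistemic model with awareness is $\langle W,\{\sim_i,\mathscr{A}_i\}_{i\in\mathcal{G}},V\rangle$ with $W\neq\emptyset$, $\sim_i$ an equivalence relation on $W$, $\mathscr{A}_i:W\to2^{\mathcal{P}}$ with $\mathscr{A}_i(w)=\mathscr{A}_i(v)$ whenever $(w,v)\in\sim_i$, and $V:\mathcal{P}\to2^W$ ($\mathcal{P}$ countable atoms, $\mathcal{G}$ finite agents). $\mathcal{L}_{AIL}$: $\varphi::=p\mid\neg\varphi\mid\varphi\wedge\varphi\mid A_i\varphi\mid I_i\varphi\mid E_i\varphi\mid[\approx]_i\varphi\mid[\circ^+]_i\varphi$. Hilbert system $\mathbf{AIL}$: axioms — propositional tautologies; $A_i\varphi\leftrightarrow A_i\neg\varphi$; $A_i(\varphi\wedge\psi)\leftrightarrow A_i\varphi\wedge A_i\psi$; $A_i\varphi\leftrightarrow A_iO_j\varphi$ for $O_j\in\{A_j,I_j,[\approx]_j,[\circ^+]_j,E_j\}$; $A_i\varphi\to I_iA_i\varphi$; $\neg A_i\varphi\to I_i\neg A_i\varphi$; $A_ip\wedge p\to[\approx]_ip$; for $\Box\in\{I_i,[\approx]_i\}$: $\Box(\varphi\to\psi)\to(\Box\varphi\to\Box\psi)$, $\Box\varphi\to\varphi$, $\neg\Box\varphi\to\Box\neg\Box\varphi$; $[\circ^+]_i(\varphi\to\psi)\to([\circ^+]_i\varphi\to[\circ^+]_i\psi)$;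 $[\circ^+]_i\varphi\to\varphi\wedge[\approx]_iI_i[\circ^+]_i\varphi$; $[\circ^+]_i(\varphi\to[\approx]_iI_i\varphi)\to(\varphi\to[\circ^+]_i\varphi)$; $E_i\varphi\leftrightarrow A_i\varphi\wedge[\circ^+]_i\varphi$; rules: modus ponens, necessitation for $I_i,[\approx]_i,[\circ^+]_i$. $\Gamma\vdash\varphi$ iff $\vdash\bigwedge\Gamma'\to\varphi$ for some finite $\Gamma'\subseteq\Gamma$. $cl(\varphi)$ is the smallest set containing $\varphi$ closed under: subformulas; $\neg\psi$ for non-negations $\psi$; $A_i\psi\Rightarrow A_i\chi$ for subformulas $\chi$ of $\psi$; $A_i\psi\Rightarrow I_iA_i\psi,I_i\neg A_i\psi,[\approx]_ip$ for atoms $p$ in $\psi$; $I_i\psi\Rightarrow I_iI_i\psi,I_i\neg I_i\psi$ unless $\psi$ is $I_i\chi$ or $\neg I_i\chi$; analogously for $[\approx]_i$; $[\circ^+]_i\psi\Rightarrow[\approx]_iI_i[\circ^+]_i\psi$; $E_i\psi\Rightarrow A_i\psi,[\circ^+]_i\psi$. A maximal consistent set in $\Phi$ is $\Gamma\subseteq\Phi$ with $\Gamma\nvdash\bot$ and no consistent $\Gamma'\subseteq\Phi$ properly extending it. The canonical model for $\Phi$ is $M^*=\langle W^*,\{\sim_i^*,\mathscr{A}_i^*\},V^*\rangle$: $W^*$ is the set of maximal consistent sets in $\Phi$; $(\Gamma,\Delta)\in\sim_i^*$ iff $\{\psi: I_i\psi\in\Gamma\}\subseteq\Delta$; $V^*(p)=\{\Gamma:p\in\Gamma\}$;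 $\mathscr{A}_i^*(\Gamma)=\{p: A_ip\in\Gamma\}$. *)

theory Defs
  imports "HOL-Library.Countable"
begin

text \<open>Atoms of type 'a (countable), agents of type 'g (finite).
  Constructors: Atom p, Neg, Conj, Aw i (A_i), Inf i (I_i), Exp i (E_i),
  Ind i ([approx]_i), Plus i ([circ+]_i).\<close>

datatype ('a, 'g) fm =
    Atom 'a
  | Neg "('a, 'g) fm"
  | Conj "('a, 'g) fm" "('a, 'g) fm"
  | Aw 'g "('a, 'g) fm"
  | Inf 'g "('a, 'g) fm"
  | Exp 'g "('a, 'g) fm"
  | Ind 'g "('a, 'g) fm"
  | Plus 'g "('a, 'g) fm"

definition Imp :: "('a, 'g) fm \<Rightarrow> ('a, 'g) fm \<Rightarrow> ('a, 'g) fm" where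
  "Imp \<phi> \<psi> = Neg (Conj \<phi> (Neg \<psi>))"

definition Iff :: "('a, 'g) fm \<Rightarrow> ('a, 'g) fm \<Rightarrow> ('a, 'g) fm" where
  "Iff \<phi> \<psi> = Conj (Imp \<phi> \<psi>) (Imp \<psi> \<phi>)"

text \<open>Falsum: a fixed propositional contradiction (all such are interderivable).\<close>
definition Bot :: "('a, 'g) fm" where
  "Bot = Conj (Atom undefined) (Neg (Atom undefined))"

definition Top :: "('a, 'g) fm" where
  "Top = Neg Bot"

definition Conjs :: "('a, 'g) fm list \<Rightarrow> ('a, 'g) fm" where
  "Conjs xs = foldr Conj xs Top"

fun peval :: "(('a, 'g) fm \<Rightarrow> bool) \<Rightarrow> ('a, 'g) fm \<Rightarrow> bool" where
  "peval v (Neg \<phi>) = (\<not> peval v \<phi>)"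
| "peval v (Conj \<phi> \<psi>) = (peval v \<phi> \<and> peval v \<psi>)"
| "peval v \<phi> = v \<phi>"

definition tautology :: "('a, 'g) fm \<Rightarrow> bool" where
  "tautology \<phi> \<longleftrightarrow> (\<forall>v. peval v \<phi>)"

inductive AIL :: "('a, 'g) fm \<Rightarrow> bool" where
  Taut: "tautology \<phi> \<Longrightarrow> AIL \<phi>"
| A_neg: "AIL (Iff (Aw i \<phi>) (Aw i (Neg \<phi>)))"
| A_conj: "AIL (Iff (Aw i (Conj \<phi> \<psi>)) (Conj (Aw i \<phi>) (Aw i \<psi>)))"
| A_A: "AIL (Iff (Aw i \<phi>) (Aw i (Aw j \<phi>)))"
| A_I: "AIL (Iff (Aw i \<phi>) (Aw i (Inf j \<phi>)))"
| A_Ind: "AIL (Iff (Aw i \<phi>) (Aw i (Ind j \<phi>)))"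
| A_Plus: "AIL (Iff (Aw i \<phi>) (Aw i (Plus j \<phi>)))"
| A_E: "AIL (Iff (Aw i \<phi>) (Aw i (Exp j \<phi>)))"
| A_intro: "AIL (Imp (Aw i \<phi>) (Inf i (Aw i \<phi>)))"
| NA_intro: "AIL (Imp (Neg (Aw i \<phi>)) (Inf i (Neg (Aw i \<phi>))))"
| A_atom: "AIL (Imp (Conj (Aw i (Atom p)) (Atom p)) (Ind i (Atom p)))"
| I_K: "AIL (Imp (Inf i (Imp \<phi> \<psi>)) (Imp (Inf i \<phi>) (Inf i \<psi>)))"
| I_T: "AIL (Imp (Inf i \<phi>) \<phi>)"
| I_5: "AIL (Imp (Neg (Inf i \<phi>)) (Inf i (Neg (Inf i \<phi>))))"
| Ind_K: "AIL (Imp (Ind i (Imp \<phi> \<psi>)) (Imp (Ind i \<phi>) (Ind i \<psi>)))"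
| Ind_T: "AIL (Imp (Ind i \<phi>) \<phi>)"
| Ind_5: "AIL (Imp (Neg (Ind i \<phi>)) (Ind i (Neg (Ind i \<phi>))))"
| Plus_K: "AIL (Imp (Plus i (Imp \<phi> \<psi>)) (Imp (Plus i \<phi>) (Plus i \<psi>)))"
| Plus_mix: "AIL (Imp (Plus i \<phi>) (Conj \<phi> (Ind i (Inf i (Plus i \<phi>)))))"
| Plus_ind: "AIL (Imp (Plus i (Imp \<phi> (Ind i (Inf i \<phi>)))) (Imp \<phi> (Plus i \<phi>)))"
| E_def: "AIL (Iff (Exp i \<phi>) (Conj (Aw i \<phi>) (Plus i \<phi>)))"
| MP: "AIL (Imp \<phi> \<psi>) \<Longrightarrow> AIL \<phi> \<Longrightarrow> AIL \<psi>"
| Nec_I: "AIL \<phi> \<Longrightarrow> AIL (Inf i \<phi>)"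
| Nec_Ind: "AIL \<phi> \<Longrightarrow> AIL (Ind i \<phi>)"
| Nec_Plus: "AIL \<phi> \<Longrightarrow> AIL (Plus i \<phi>)"

definition derives :: "('a, 'g) fm set \<Rightarrow> ('a, 'g) fm \<Rightarrow> bool" where
  "derives \<Gamma> \<phi> \<longleftrightarrow> (\<exists>xs. set xs \<subseteq> \<Gamma> \<and> AIL (Imp (Conjs xs) \<phi>))"

definition consistent :: "('a, 'g) fm set \<Rightarrow> bool" where
  "consistent \<Gamma> \<longleftrightarrow> \<not> derives \<Gamma> Bot"

definition mcs_in :: "('a, 'g) fm set \<Rightarrow> ('a, 'g) fm set \<Rightarrow> bool" where
  "mcs_in \<Phi> \<Gamma> \<longleftrightarrow> \<Gamma> \<subseteq> \<Phi> \<and> consistent \<Gamma> \<and>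
     (\<forall>\<Gamma>'. \<Gamma> \<subset> \<Gamma>' \<and> \<Gamma>' \<subseteq> \<Phi> \<longrightarrow> \<not> consistent \<Gamma>')"

fun subfms :: "('a, 'g) fm \<Rightarrow> ('a, 'g) fm set" where
  "subfms (Atom p) = {Atom p}"
| "subfms (Neg \<phi>) = insert (Neg \<phi>) (subfms \<phi>)"
| "subfms (Conj \<phi> \<psi>) = insert (Conj \<phi> \<psi>) (subfms \<phi> \<union> subfms \<psi>)"
| "subfms (Aw i \<phi>) = insert (Aw i \<phi>) (subfms \<phi>)"
| "subfms (Inf i \<phi>) = insert (Inf i \<phi>) (subfms \<phi>)"
| "subfms (Exp i \<phi>) = insert (Exp i \<phi>) (subfms \<phi>)"
| "subfms (Ind i \<phi>) = insert (Ind i \<phi>) (subfms \<phi>)"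
| "subfms (Plus i \<phi>) = insert (Plus i \<phi>) (subfms \<phi>)"

fun atoms :: "('a, 'g) fm \<Rightarrow> 'a set" where
  "atoms (Atom p) = {p}"
| "atoms (Neg \<phi>) = atoms \<phi>"
| "atoms (Conj \<phi> \<psi>) = atoms \<phi> \<union> atoms \<psi>"
| "atoms (Aw i \<phi>) = atoms \<phi>"
| "atoms (Inf i \<phi>) = atoms \<phi>"
| "atoms (Exp i \<phi>) = atoms \<phi>"
| "atoms (Ind i \<phi>) = atoms \<phi>"
| "atoms (Plus i \<phi>) = atoms \<phi>"

fun is_neg :: "('a, 'g) fm \<Rightarrow> bool" where
  "is_neg (Neg _) = True"
| "is_neg _ = False"

inductive_set cl :: "('a, 'g) fm \<Rightarrow> ('a, 'g) fm set" for \<phi> :: "('a, 'g) fm" where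
  base: "\<phi> \<in> cl \<phi>"
| sub: "\<psi> \<in> cl \<phi> \<Longrightarrow> \<chi> \<in> subfms \<psi> \<Longrightarrow> \<chi> \<in> cl \<phi>"
| neg: "\<psi> \<in> cl \<phi> \<Longrightarrow> \<not> is_neg \<psi> \<Longrightarrow> Neg \<psi> \<in> cl \<phi>"
| A_sub: "Aw i \<psi> \<in> cl \<phi> \<Longrightarrow> \<chi> \<in> subfms \<psi> \<Longrightarrow> Aw i \<chi> \<in> cl \<phi>"
| A_IA: "Aw i \<psi> \<in> cl \<phi> \<Longrightarrow> Inf i (Aw i \<psi>) \<in> cl \<phi>"
| A_INA: "Aw i \<psi> \<in> cl \<phi> \<Longrightarrow> Inf i (Neg (Aw i \<psi>)) \<in> cl \<phi>"
| A_Ind: "Aw i \<psi> \<in> cl \<phi> \<Longrightarrow> p \<in> atoms \<psi> \<Longrightarrow> Ind i (Atom p) \<in> cl \<phi>"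
| I_II: "Inf i \<psi> \<in> cl \<phi> \<Longrightarrow> \<not> (\<exists>\<chi>. \<psi> = Inf i \<chi> \<or> \<psi> = Neg (Inf i \<chi>))
           \<Longrightarrow> Inf i (Inf i \<psi>) \<in> cl \<phi>"
| I_INI: "Inf i \<psi> \<in> cl \<phi> \<Longrightarrow> \<not> (\<exists>\<chi>. \<psi> = Inf i \<chi> \<or> \<psi> = Neg (Inf i \<chi>))
           \<Longrightarrow> Inf i (Neg (Inf i \<psi>)) \<in> cl \<phi>"
| Ind_II: "Ind i \<psi> \<in> cl \<phi> \<Longrightarrow> \<not> (\<exists>\<chi>. \<psi> = Ind i \<chi> \<or> \<psi> = Neg (Ind i \<chi>))
           \<Longrightarrow> Ind i (Ind i \<psi>) \<in> cl \<phi>"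
| Ind_INI: "Ind i \<psi> \<in> cl \<phi> \<Longrightarrow> \<not> (\<exists>\<chi>. \<psi> = Ind i \<chi> \<or> \<psi> = Neg (Ind i \<chi>))
           \<Longrightarrow> Ind i (Neg (Ind i \<psi>)) \<in> cl \<phi>"
| Plus_cl: "Plus i \<psi> \<in> cl \<phi> \<Longrightarrow> Ind i (Inf i (Plus i \<psi>)) \<in> cl \<phi>"
| E_A: "Exp i \<psi> \<in> cl \<phi> \<Longrightarrow> Aw i \<psi> \<in> cl \<phi>"
| E_Plus: "Exp i \<psi> \<in> cl \<phi> \<Longrightarrow> Plus i \<psi> \<in> cl \<phi>"

definition epistemic_model ::
  "'s set \<Rightarrow> ('g \<Rightarrow> 's rel) \<Rightarrow> ('g \<Rightarrow> 's \<Rightarrow> 'a set) \<Rightarrow> ('a \<Rightarrow> 's set) \<Rightarrow> bool" where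
  "epistemic_model W R A V \<longleftrightarrow>
     W \<noteq> {} \<and>
     (\<forall>i. equiv W (R i)) \<and>
     (\<forall>i w v. (w, v) \<in> R i \<longrightarrow> A i w = A i v) \<and>
     (\<forall>p. V p \<subseteq> W)"

definition canon_W :: "('a, 'g) fm set \<Rightarrow> ('a, 'g) fm set set" where
  "canon_W \<Phi> = {\<Gamma>. mcs_in \<Phi> \<Gamma>}"

definition canon_R :: "('a, 'g) fm set \<Rightarrow> 'g \<Rightarrow> (('a, 'g) fm set) rel" where
  "canon_R \<Phi> i = {(\<Gamma>, \<Delta>). \<Gamma> \<in> canon_W \<Phi> \<and> \<Delta> \<in> canon_W \<Phi> \<and> {\<psi>. Inf i \<psi> \<in> \<Gamma>} \<subseteq> \<Delta>}"

definition canon_A :: "('a, 'g) fm set \<Rightarrow> 'g \<Rightarrow> ('a, 'g) fm set \<Rightarrow> 'a set" where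
  "canon_A \<Phi> i \<Gamma> = {p. Aw i (Atom p) \<in> \<Gamma>}"

definition canon_V :: "('a, 'g) fm set \<Rightarrow> 'a \<Rightarrow> ('a, 'g) fm set set" where
  "canon_V \<Phi> p = {\<Gamma> \<in> canon_W \<Phi>. Atom p \<in> \<Gamma>}"

end

theory Submission
  imports Defs
begin

text \<open>The substance is that each canonical relation is an equivalence. Reflexivity is axiom T.
  For symmetry and transitivity it suffices that related worlds contain the same formulas
  \<open>I\<^sub>i \<theta>\<close> of the closure. If \<open>\<theta>\<close> is not of the form \<open>I\<^sub>i \<chi>\<close> or \<open>\<not> I\<^sub>i \<chi>\<close>, the closure contains
  \<open>I\<^sub>i I\<^sub>i \<theta>\<close> and \<open>I\<^sub>i \<not> I\<^sub>i \<theta>\<close>, so positive and negative introspection carry \<open>I\<^sub>i \<theta>\<close> across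
  the relation in both directions; the two excluded forms reduce to a smaller \<open>\<theta>\<close>, because
  maximal consistent sets contain \<open>I\<^sub>i I\<^sub>i \<chi>\<close> iff they contain \<open>I\<^sub>i \<chi>\<close>, and \<open>I\<^sub>i \<not> I\<^sub>i \<chi>\<close> iff
  they do not contain \<open>I\<^sub>i \<chi>\<close>. Awareness is constant on classes because \<open>A\<^sub>i p \<rightarrow> I\<^sub>i A\<^sub>i p\<close>,
  and there are worlds by Zorn's lemma, the empty set being consistent by soundness.\<close>

lemma peval_Imp [simp]: "peval v (Imp \<phi> \<psi>) \<longleftrightarrow> (peval v \<phi> \<longrightarrow> peval v \<psi>)"
  by (simp add: Imp_def)

lemma peval_Bot [simp]: "\<not> peval v Bot"
  by (simp add: Bot_def)

lemma peval_Top [simp]: "peval v Top"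
  by (simp add: Top_def)

lemma peval_Conjs [simp]: "peval v (Conjs xs) \<longleftrightarrow> (\<forall>x\<in>set xs. peval v x)"
  by (induction xs) (simp_all add: Conjs_def)

lemma AIL_tautological_consequence:
  assumes "\<forall>v. (\<forall>\<alpha>\<in>set as. peval v \<alpha>) \<longrightarrow> peval v \<beta>" and "\<forall>\<alpha>\<in>set as. AIL \<alpha>"
  shows "AIL \<beta>"
  using assms
proof (induction as arbitrary: \<beta>)
  case Nil
  then show ?case by (intro AIL.Taut) (simp add: tautology_def)
next
  case (Cons \<alpha> as)
  have "AIL (Imp \<alpha> \<beta>)" using Cons.prems by (intro Cons.IH) auto
  with Cons.prems show ?case by (meson AIL.MP list.set_intros(1))
qed

lemma derives_tautological_consequence:
  assumes "\<forall>v. (\<forall>\<alpha>\<in>set as. peval v \<alpha>) \<longrightarrow> peval v \<beta>" and "\<forall>\<alpha>\<in>set as. derives \<Gamma> \<alpha>"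
  shows "derives \<Gamma> \<beta>"
  using assms
proof (induction as arbitrary: \<beta>)
  case Nil
  have "AIL (Imp (Conjs []) \<beta>)"
    by (rule AIL_tautological_consequence[of "[]"]) (use Nil in auto)
  then show ?case unfolding derives_def by (intro exI[of _ "[]"]) auto
next
  case (Cons \<alpha> as)
  have "derives \<Gamma> (Imp \<alpha> \<beta>)" using Cons.prems by (intro Cons.IH) auto
  then obtain xs where xs: "set xs \<subseteq> \<Gamma>" "AIL (Imp (Conjs xs) (Imp \<alpha> \<beta>))"
    unfolding derives_def by blast
  obtain ys where ys: "set ys \<subseteq> \<Gamma>" "AIL (Imp (Conjs ys) \<alpha>)"
    using Cons.prems unfolding derives_def by auto
  have "AIL (Imp (Conjs (xs @ ys)) \<beta>)"
    by (rule AIL_tautological_consequence[of "[Imp (Conjs xs) (Imp \<alpha> \<beta>), Imp (Conjs ys) \<alpha>]"])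
      (use xs ys in auto)
  with xs ys show ?case unfolding derives_def by (intro exI[of _ "xs @ ys"]) auto
qed

lemma derives_mem: "\<alpha> \<in> \<Gamma> \<Longrightarrow> derives \<Gamma> \<alpha>"
  unfolding derives_def
  by (intro exI[of _ "[\<alpha>]"]) (auto intro: AIL_tautological_consequence[of "[]"])

lemma derives_AIL: "AIL \<alpha> \<Longrightarrow> derives \<Gamma> \<alpha>"
  unfolding derives_def
  by (intro exI[of _ "[]"]) (auto intro: AIL_tautological_consequence[of "[\<alpha>]"])

lemma derives_mp: "derives \<Gamma> (Imp \<alpha> \<beta>) \<Longrightarrow> derives \<Gamma> \<alpha> \<Longrightarrow> derives \<Gamma> \<beta>"
  by (rule derives_tautological_consequence[of "[Imp \<alpha> \<beta>, \<alpha>]"]) auto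

text \<open>Truth at the one-world model in which every atom is false and every agent is aware of
  every atom.\<close>

fun true_at_trivial_model :: "('a, 'g) fm \<Rightarrow> bool" where
  "true_at_trivial_model (Atom p) = False"
| "true_at_trivial_model (Neg \<phi>) = (\<not> true_at_trivial_model \<phi>)"
| "true_at_trivial_model (Conj \<phi> \<psi>) = (true_at_trivial_model \<phi> \<and> true_at_trivial_model \<psi>)"
| "true_at_trivial_model (Aw i \<phi>) = True"
| "true_at_trivial_model (Inf i \<phi>) = true_at_trivial_model \<phi>"
| "true_at_trivial_model (Exp i \<phi>) = true_at_trivial_model \<phi>"
| "true_at_trivial_model (Ind i \<phi>) = true_at_trivial_model \<phi>"
| "true_at_trivial_model (Plus i \<phi>) = true_at_trivial_model \<phi>"

lemma peval_true_at_trivial_model: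
  "peval true_at_trivial_model \<phi> = true_at_trivial_model \<phi>"
  by (induction \<phi>) auto

lemma AIL_sound_trivial_model: "AIL \<phi> \<Longrightarrow> true_at_trivial_model \<phi>"
proof (induction rule: AIL.induct)
  case (Taut \<phi>)
  then show ?case by (metis tautology_def peval_true_at_trivial_model)
qed (auto simp: Imp_def Iff_def)

lemma consistent_empty: "consistent {}"
proof -
  have "\<not> AIL (Imp (Conjs []) Bot)"
    using AIL_sound_trivial_model by (fastforce simp: Imp_def Conjs_def Top_def Bot_def)
  then show ?thesis unfolding consistent_def derives_def by auto
qed

lemma mcs_in_exists: "\<exists>\<Gamma>. mcs_in \<Phi> \<Gamma>"
proof -
  let ?C = "{\<Gamma>. \<Gamma> \<subseteq> \<Phi> \<and> consistent \<Gamma>}"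
  have "\<exists>M\<in>?C. \<forall>X\<in>?C. M \<subseteq> X \<longrightarrow> X = M"
  proof (rule subset_Zorn_nonempty)
    show "?C \<noteq> {}" using consistent_empty by blast
  next
    fix \<C> assume "\<C> \<noteq> {}" and chain: "subset.chain ?C \<C>"
    have "consistent (\<Union>\<C>)"
      unfolding consistent_def
    proof
      assume "derives (\<Union>\<C>) Bot"
      then obtain xs where xs: "set xs \<subseteq> \<Union>\<C>" "AIL (Imp (Conjs xs) Bot)"
        unfolding derives_def by blast
      obtain \<Gamma> where "\<Gamma> \<in> \<C>" "set xs \<subseteq> \<Gamma>"
        using finite_subset_Union_chain[OF _ xs(1) \<open>\<C> \<noteq> {}\<close> chain] by blast
      with xs chain show False
        unfolding consistent_def derives_def subset.chain_def by blast
    qed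
    with chain show "\<Union>\<C> \<in> ?C" unfolding subset.chain_def by blast
  qed
  then obtain M where "M \<in> ?C" and "\<forall>X\<in>?C. M \<subseteq> X \<longrightarrow> X = M" by blast
  then have "mcs_in \<Phi> M" unfolding mcs_in_def by blast
  then show ?thesis ..
qed

lemma mcs_in_subset: "mcs_in \<Phi> \<Gamma> \<Longrightarrow> \<Gamma> \<subseteq> \<Phi>"
  by (simp add: mcs_in_def)

lemma mcs_in_derives_Neg:
  assumes "mcs_in \<Phi> \<Gamma>" and "\<theta> \<in> \<Phi>" and "\<theta> \<notin> \<Gamma>"
  shows "derives \<Gamma> (Neg \<theta>)"
proof -
  have "\<not> consistent (insert \<theta> \<Gamma>)" using assms unfolding mcs_in_def by blast
  then obtain ys where ys: "set ys \<subseteq> insert \<theta> \<Gamma>" "AIL (Imp (Conjs ys) Bot)"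
    by (auto simp: consistent_def derives_def)
  let ?ys = "filter (\<lambda>\<alpha>. \<alpha> \<noteq> \<theta>) ys"
  have "AIL (Imp (Conjs ?ys) (Neg \<theta>))"
    by (rule AIL_tautological_consequence[of "[Imp (Conjs ys) Bot]"]) (use ys in force)+
  moreover have "set ?ys \<subseteq> \<Gamma>" using ys by auto
  ultimately show ?thesis unfolding derives_def by blast
qed

lemma mcs_in_not_derives_both:
  "mcs_in \<Phi> \<Gamma> \<Longrightarrow> derives \<Gamma> \<theta> \<Longrightarrow> derives \<Gamma> (Neg \<theta>) \<Longrightarrow> False"
  unfolding mcs_in_def consistent_def
  using derives_tautological_consequence[of "[\<theta>, Neg \<theta>]" Bot \<Gamma>] by auto

lemma mcs_in_derives_mem: "mcs_in \<Phi> \<Gamma> \<Longrightarrow> \<theta> \<in> \<Phi> \<Longrightarrow> derives \<Gamma> \<theta> \<Longrightarrow> \<theta> \<in> \<Gamma>"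
  using mcs_in_derives_Neg mcs_in_not_derives_both by blast

lemma mcs_in_AIL_mp:
  "mcs_in \<Phi> \<Gamma> \<Longrightarrow> AIL (Imp \<alpha> \<beta>) \<Longrightarrow> \<alpha> \<in> \<Gamma> \<Longrightarrow> \<beta> \<in> \<Phi> \<Longrightarrow> \<beta> \<in> \<Gamma>"
  by (meson derives_AIL derives_mem derives_mp mcs_in_derives_mem)

lemma Inf_mono: "AIL (Imp \<phi> \<psi>) \<Longrightarrow> AIL (Imp (Inf i \<phi>) (Inf i \<psi>))"
  by (meson AIL.I_K AIL.MP AIL.Nec_I)

text \<open>Axiom 4, via \<open>\<not> I \<not> I \<theta> \<rightarrow> I \<theta>\<close> (contraposed 5), its necessitation, and 5 and T
  applied to \<open>I \<theta>\<close>.\<close>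

lemma Inf_4: "AIL (Imp (Inf i \<theta>) (Inf i (Inf i \<theta>)))"
proof -
  let ?N = "Neg (Inf i (Neg (Inf i \<theta>)))"
  have "AIL (Imp ?N (Inf i \<theta>))"
    by (rule AIL_tautological_consequence[of "[Imp (Neg (Inf i \<theta>)) (Inf i (Neg (Inf i \<theta>)))]"])
      (auto intro: AIL.I_5)
  then have nec: "AIL (Imp (Inf i ?N) (Inf i (Inf i \<theta>)))"
    by (rule Inf_mono)
  have T: "AIL (Imp (Inf i (Neg (Inf i \<theta>))) (Neg (Inf i \<theta>)))" by (rule AIL.I_T)
  have 5: "AIL (Imp ?N (Inf i ?N))" by (rule AIL.I_5)
  show ?thesis
    by (rule AIL_tautological_consequence[of "[Imp (Inf i ?N) (Inf i (Inf i \<theta>)),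
        Imp (Inf i (Neg (Inf i \<theta>))) (Neg (Inf i \<theta>)), Imp ?N (Inf i ?N)]"])
      (use nec T 5 in auto)
qed

lemma mcs_in_Inf_Inf_iff:
  assumes "mcs_in \<Phi> \<Gamma>" and "Inf i (Inf i \<chi>) \<in> \<Phi>" and "Inf i \<chi> \<in> \<Phi>"
  shows "Inf i (Inf i \<chi>) \<in> \<Gamma> \<longleftrightarrow> Inf i \<chi> \<in> \<Gamma>"
  using mcs_in_AIL_mp[OF assms(1) AIL.I_T _ assms(3)] mcs_in_AIL_mp[OF assms(1) Inf_4 _ assms(2)]
  by blast

lemma mcs_in_Inf_Neg_Inf_iff:
  assumes M: "mcs_in \<Phi> \<Gamma>" and "Inf i (Neg (Inf i \<chi>)) \<in> \<Phi>" and "Inf i \<chi> \<in> \<Phi>"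
  shows "Inf i (Neg (Inf i \<chi>)) \<in> \<Gamma> \<longleftrightarrow> Inf i \<chi> \<notin> \<Gamma>"
proof
  assume "Inf i (Neg (Inf i \<chi>)) \<in> \<Gamma>"
  then have "derives \<Gamma> (Neg (Inf i \<chi>))"
    by (meson AIL.I_T derives_AIL derives_mem derives_mp)
  then show "Inf i \<chi> \<notin> \<Gamma>" using M derives_mem mcs_in_not_derives_both by blast
next
  assume "Inf i \<chi> \<notin> \<Gamma>"
  then have "derives \<Gamma> (Neg (Inf i \<chi>))" using assms mcs_in_derives_Neg by blast
  then show "Inf i (Neg (Inf i \<chi>)) \<in> \<Gamma>"
    by (meson AIL.I_5 assms derives_AIL derives_mp mcs_in_derives_mem)
qed

lemma canon_R_D:
  assumes "(\<Gamma>, \<Delta>) \<in> canon_R \<Phi> i"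
  shows "mcs_in \<Phi> \<Gamma>" and "mcs_in \<Phi> \<Delta>" and "\<And>\<psi>. Inf i \<psi> \<in> \<Gamma> \<Longrightarrow> \<psi> \<in> \<Delta>"
  using assms by (auto simp: canon_R_def canon_W_def)

lemma canon_R_Inf_iff_introspective:
  assumes R: "(\<Gamma>, \<Delta>) \<in> canon_R \<Phi> i" and "Inf i \<theta> \<in> \<Phi>"
    and "Inf i (Inf i \<theta>) \<in> \<Phi>" and "Inf i (Neg (Inf i \<theta>)) \<in> \<Phi>"
  shows "Inf i \<theta> \<in> \<Gamma> \<longleftrightarrow> Inf i \<theta> \<in> \<Delta>"
proof
  assume "Inf i \<theta> \<in> \<Gamma>"
  then have "Inf i (Inf i \<theta>) \<in> \<Gamma>"
    using mcs_in_Inf_Inf_iff[OF canon_R_D(1)[OF R] assms(3,2)] by simp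
  then show "Inf i \<theta> \<in> \<Delta>" by (rule canon_R_D(3)[OF R])
next
  assume "Inf i \<theta> \<in> \<Delta>"
  show "Inf i \<theta> \<in> \<Gamma>"
  proof (rule ccontr)
    assume "Inf i \<theta> \<notin> \<Gamma>"
    then have "Inf i (Neg (Inf i \<theta>)) \<in> \<Gamma>"
      using mcs_in_Inf_Neg_Inf_iff[OF canon_R_D(1)[OF R] assms(4,2)] by simp
    then have "Neg (Inf i \<theta>) \<in> \<Delta>" by (rule canon_R_D(3)[OF R])
    with \<open>Inf i \<theta> \<in> \<Delta>\<close> show False
      using mcs_in_not_derives_both[OF canon_R_D(2)[OF R]] derives_mem by metis
  qed
qed

lemma subfms_self: "\<phi> \<in> subfms \<phi>"
  by (cases \<phi>) auto

lemma cl_Inf_D: "Inf i \<theta> \<in> cl \<phi> \<Longrightarrow> \<theta> \<in> cl \<phi>"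
  by (rule cl.sub) (auto simp: subfms_self)

lemma cl_Inf_Neg_Inf_D: "Inf i (Neg (Inf i \<chi>)) \<in> cl \<phi> \<Longrightarrow> Inf i \<chi> \<in> cl \<phi>"
  by (rule cl.sub) (auto simp: subfms_self)

lemma canon_R_Inf_iff:
  assumes R: "(\<Gamma>, \<Delta>) \<in> canon_R (cl \<phi>) i"
  shows "Inf i \<theta> \<in> cl \<phi> \<Longrightarrow> Inf i \<theta> \<in> \<Gamma> \<longleftrightarrow> Inf i \<theta> \<in> \<Delta>"
proof (induction "size \<theta>" arbitrary: \<theta> rule: less_induct)
  case less
  note mcs = canon_R_D(1,2)[OF R]
  consider (Inf) \<chi> where "\<theta> = Inf i \<chi>" | (Neg_Inf) \<chi> where "\<theta> = Neg (Inf i \<chi>)"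
    | (other) "\<not> (\<exists>\<chi>. \<theta> = Inf i \<chi> \<or> \<theta> = Neg (Inf i \<chi>))"
    by auto
  then show ?case
  proof cases
    case Inf
    have cl: "Inf i \<chi> \<in> cl \<phi>" using cl_Inf_D[of i "Inf i \<chi>"] less.prems Inf by simp
    have "Inf i \<chi> \<in> \<Gamma> \<longleftrightarrow> Inf i \<chi> \<in> \<Delta>" using less.hyps[OF _ cl] Inf by simp
    then show ?thesis
      using mcs_in_Inf_Inf_iff[OF mcs(1)] mcs_in_Inf_Inf_iff[OF mcs(2)] less.prems cl Inf
      by simp
  next
    case Neg_Inf
    have cl: "Inf i \<chi> \<in> cl \<phi>" using cl_Inf_Neg_Inf_D less.prems Neg_Inf by simp
    have "Inf i \<chi> \<in> \<Gamma> \<longleftrightarrow> Inf i \<chi> \<in> \<Delta>" using less.hyps[OF _ cl] Neg_Inf by simp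
    then show ?thesis
      using mcs_in_Inf_Neg_Inf_iff[OF mcs(1)] mcs_in_Inf_Neg_Inf_iff[OF mcs(2)]
        less.prems cl Neg_Inf
      by simp
  next
    case other
    show ?thesis
      using canon_R_Inf_iff_introspective[OF R less.prems
          cl.I_II[OF less.prems other] cl.I_INI[OF less.prems other]] .
  qed
qed

lemma canon_R_refl:
  assumes "\<Gamma> \<in> canon_W (cl \<phi>)"
  shows "(\<Gamma>, \<Gamma>) \<in> canon_R (cl \<phi>) i"
proof -
  have mcs: "mcs_in (cl \<phi>) \<Gamma>" using assms by (simp add: canon_W_def)
  have "\<psi> \<in> \<Gamma>" if "Inf i \<psi> \<in> \<Gamma>" for \<psi>
    using mcs_in_AIL_mp[OF mcs AIL.I_T that cl_Inf_D] mcs_in_subset[OF mcs] that by blast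
  with assms show ?thesis by (auto simp: canon_R_def)
qed

lemma canon_R_sym:
  assumes R: "(\<Gamma>, \<Delta>) \<in> canon_R (cl \<phi>) i"
  shows "(\<Delta>, \<Gamma>) \<in> canon_R (cl \<phi>) i"
proof -
  have "\<psi> \<in> \<Gamma>" if "Inf i \<psi> \<in> \<Delta>" for \<psi>
  proof -
    have "Inf i \<psi> \<in> cl \<phi>" using that mcs_in_subset[OF canon_R_D(2)[OF R]] by blast
    then have "Inf i \<psi> \<in> \<Gamma>" using canon_R_Inf_iff[OF R] that by blast
    moreover have "\<Gamma> \<in> canon_W (cl \<phi>)" using canon_R_D(1)[OF R] by (simp add: canon_W_def)
    ultimately show ?thesis by (rule canon_R_D(3)[OF canon_R_refl, rotated])
  qed
  with R show ?thesis by (auto simp: canon_R_def)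
qed

lemma canon_R_trans:
  assumes R: "(\<Gamma>, \<Delta>) \<in> canon_R (cl \<phi>) i" and R': "(\<Delta>, \<Sigma>) \<in> canon_R (cl \<phi>) i"
  shows "(\<Gamma>, \<Sigma>) \<in> canon_R (cl \<phi>) i"
proof -
  have "\<psi> \<in> \<Sigma>" if "Inf i \<psi> \<in> \<Gamma>" for \<psi>
  proof -
    have "Inf i \<psi> \<in> cl \<phi>" using that mcs_in_subset[OF canon_R_D(1)[OF R]] by blast
    then have "Inf i \<psi> \<in> \<Delta>" using canon_R_Inf_iff[OF R] that by blast
    then show ?thesis using canon_R_D(3)[OF R'] by blast
  qed
  with R R' show ?thesis by (auto simp: canon_R_def)
qed

lemma equiv_canon_R: "equiv (canon_W (cl \<phi>)) (canon_R (cl \<phi>) i)"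
proof (rule equivI)
  show "canon_R (cl \<phi>) i \<subseteq> canon_W (cl \<phi>) \<times> canon_W (cl \<phi>)"
    by (auto simp: canon_R_def)
  show "refl_on (canon_W (cl \<phi>)) (canon_R (cl \<phi>) i)"
    by (rule refl_onI) (rule canon_R_refl)
  show "sym (canon_R (cl \<phi>) i)" by (rule symI) (rule canon_R_sym)
  show "trans (canon_R (cl \<phi>) i)" by (rule transI) (rule canon_R_trans)
qed

lemma canon_A_canon_R_subset:
  assumes R: "(\<Gamma>, \<Delta>) \<in> canon_R (cl \<phi>) i"
  shows "canon_A (cl \<phi>) i \<Gamma> \<subseteq> canon_A (cl \<phi>) i \<Delta>"
proof
  fix p assume "p \<in> canon_A (cl \<phi>) i \<Gamma>"
  then have aware: "Aw i (Atom p) \<in> \<Gamma>" by (simp add: canon_A_def)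
  then have "Aw i (Atom p) \<in> cl \<phi>" using mcs_in_subset[OF canon_R_D(1)[OF R]] by blast
  then have "Inf i (Aw i (Atom p)) \<in> \<Gamma>"
    by (rule mcs_in_AIL_mp[OF canon_R_D(1)[OF R] AIL.A_intro aware cl.A_IA])
  then show "p \<in> canon_A (cl \<phi>) i \<Delta>" using canon_R_D(3)[OF R] by (simp add: canon_A_def)
qed

theorem lemma7:
  fixes \<phi> :: "('a::countable, 'g::finite) fm"
  shows "epistemic_model (canon_W (cl \<phi>)) (canon_R (cl \<phi>)) (canon_A (cl \<phi>)) (canon_V (cl \<phi>))"
  unfolding epistemic_model_def
proof (intro conjI allI impI)
  show "canon_W (cl \<phi>) \<noteq> {}"
    using mcs_in_exists[of "cl \<phi>"] by (auto simp: canon_W_def)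
  show "equiv (canon_W (cl \<phi>)) (canon_R (cl \<phi>) i)" for i
    by (rule equiv_canon_R)
  show "canon_A (cl \<phi>) i \<Gamma> = canon_A (cl \<phi>) i \<Delta>"
    if "(\<Gamma>, \<Delta>) \<in> canon_R (cl \<phi>) i" for i \<Gamma> \<Delta>
    using canon_A_canon_R_subset[OF that] canon_A_canon_R_subset[OF canon_R_sym[OF that]]
    by (rule subset_antisym)
  show "canon_V (cl \<phi>) p \<subseteq> canon_W (cl \<phi>)" for p
    by (auto simp: canon_V_def)
qed

end
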